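(* Let $0<s<1$, $2s<N\le4s$, $1+\frac{2s}{N}<p<\frac{N}{N-2s}$ and $a_1,a_2,\mu_1,\mu_2,\beta>0$. There exists $K>0$ sufficiently small such that $\sup_A E<\inf_B E$ and $E(u,v)>0$ for all $(u,v)\in A$, where $$A=\{(u,v)\in H^{rad}_{a_1}\times H^{rad}_{a_2}:\|(-\Delta)^{s/2}u\|^2_{L^2}+\|(-\Delta)^{s/2}v\|^2_{L^2}\le K\},$$ $$B=\{(u,v)\in H^{rad}_{a_1}\times H^{rad}_{a_2}:\|(-\Delta)^{s/2}u\|^2_{L^2}+\|(-\Delta)^{s/2}v\|^2_{L^2}=2K\}.$$
   Context: $(-\Delta)^s$ is the fractional Laplacian; $H_a:=\{u\in H^s(\mathbb{R}^N):\int u^2=a^2\}$, $H^{rad}_a$ its subset of radial functions. $E(u,v)=\frac12\int(|(-\Delta)^{s/2}u|^2+|(-\Delta)^{s/2}v|^2)dx-\frac1{2p}\int(\mu_1|u|^{2p}+2\beta|u|^p|v|^p+\mu_2|v|^{2p})dx$. *)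

theory Defs
  imports "HOL-Analysis.Analysis" "HOL-Analysis.Gamma_Function"
begin

text \<open>Normalising constant C(N,s) of the fractional Laplacian.\<close>
definition frac_const :: "real \<Rightarrow> real \<Rightarrow> real" where
  "frac_const N s = s * (2::real) powr (2* s) * Gamma ((N + 2* s)/2) / (pi powr (N/2) * Gamma (1 - s))"

definition gagliardo :: "real \<Rightarrow> (real^'n \<Rightarrow> real) \<Rightarrow> ennreal" where
  "gagliardo s u = (\<integral>\<^sup>+ x. \<integral>\<^sup>+ y. ennreal ((u x - u y)^2 / norm (x - y) powr (real CARD('n) + 2* s)) \<partial>lborel \<partial>lborel)"

text \<open>Fractional Sobolev space H^s(R^N), N = CARD('n).\<close>
definition Hs :: "real \<Rightarrow> (real^'n \<Rightarrow> real) set" where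
  "Hs s = {u. u \<in> borel_measurable lborel \<and> integrable lborel (\<lambda>x. (u x)^2) \<and> gagliardo s u < \<infinity>}"

text \<open>\<open>\<parallel>(-\<Delta>)^{s/2} u\<parallel>^2_{L^2} = C(N,s)/2 [u]^2\<close>.\<close>
definition frac_grad_sq :: "real \<Rightarrow> (real^'n \<Rightarrow> real) \<Rightarrow> real" where
  "frac_grad_sq s u = frac_const (real CARD('n)) s / 2 * enn2real (gagliardo s u)"

definition radial :: "(real^'n \<Rightarrow> real) \<Rightarrow> bool" where
  "radial u \<longleftrightarrow> (\<forall>x y. norm x = norm y \<longrightarrow> u x = u y)"

definition H_rad :: "real \<Rightarrow> real \<Rightarrow> (real^'n \<Rightarrow> real) set" where
  "H_rad s a = {u \<in> Hs s. (\<integral>x. (u x)^2 \<partial>lborel) = a^2 \<and> radial u}"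

definition energy :: "real \<Rightarrow> real \<Rightarrow> real \<Rightarrow> real \<Rightarrow> real \<Rightarrow>
    (real^'n \<Rightarrow> real) \<Rightarrow> (real^'n \<Rightarrow> real) \<Rightarrow> real" where
  "energy s p \<mu>1 \<mu>2 \<beta> u v =
     1/2 * (frac_grad_sq s u + frac_grad_sq s v)
     - 1/(2* p) * (\<integral>x. (\<mu>1 * \<bar>u x\<bar> powr (2* p) + 2*\<beta> * \<bar>u x\<bar> powr p * \<bar>v x\<bar> powr p
                         + \<mu>2 * \<bar>v x\<bar> powr (2* p)) \<partial>lborel)"

end

theory Submission
  imports Defs
begin

text \<open>
  Let T = ||(-Delta)^(s/2) u||^2 + ||(-Delta)^(s/2) v||^2 and gamma = (p - 1) N / (2 s) > 1.
  On the constraint set the energy satisfies T/2 - M T^gamma <= E <= T/2, so for small K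
  we get E <= K/2 on A, E >= K - M (2K)^gamma > K/2 on B, and E > 0 on A.

  The lower bound is the Gagliardo-Nirenberg inequality int |u|^(2p) <= C [u]^(2 gamma) for
  functions of bounded L^2 mass, proved from the Gagliardo double integral [u]^2 alone by a
  De Giorgi type argument. A point x with |u x| > t satisfies |u x - u y| >= t/2 at every y of
  a ball around x where |u y| <= t/4; taking balls of measure 2 |{|u| > t/4}| yields the
  recursion |{|u| > t}| <= C [u]^2 t^-2 |{|u| > t/4}|^theta with theta = 2s/N < 1. Iterating
  it from Chebyshev's inequality gives level-set decay t^-q for every q < 2/(1 - theta), and
  2p < 2/(1 - theta) is exactly the hypothesis p < N/(N - 2s). Summing over the dyadic
  levels t0 2^k with t0 = [u]^(1/theta) turns this decay into the bound on int |u|^(2p).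
\<close>

section \<open>Level sets and integrals of powers\<close>

lemma emeasure_abs_gt_le_L2:
  fixes u :: "'a \<Rightarrow> real"
  assumes [measurable]: "u \<in> borel_measurable M"
    and L2: "integrable M (\<lambda>x. (u x)^2)" and "0 < t"
  shows "emeasure M {x\<in>space M. t < \<bar>u x\<bar>} \<le> ennreal ((\<integral>x. (u x)^2 \<partial>M) / t^2)"
proof -
  have "{x\<in>space M. t < \<bar>u x\<bar>} \<subseteq> {x\<in>space M. t^2 \<le> (u x)^2}"
    using \<open>0 < t\<close> by (auto simp flip: abs_le_square_iff)
  then have "emeasure M {x\<in>space M. t < \<bar>u x\<bar>} \<le> emeasure M {x\<in>space M. t^2 \<le> (u x)^2}"
    by (rule emeasure_mono) measurable
  also have "\<dots> \<le> ennreal (1 / t^2 * (\<integral>x. (u x)^2 \<partial>M))"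
    using L2 \<open>0 < t\<close> by (intro integral_Markov_inequality) auto
  finally show ?thesis
    by simp
qed

lemma
  fixes u :: "'a \<Rightarrow> real"
  assumes [measurable]: "u \<in> borel_measurable M"
    and "integrable M (\<lambda>x. (u x)^2)" and "0 < t"
  shows fmeasurable_abs_gt: "{x\<in>space M. t < \<bar>u x\<bar>} \<in> fmeasurable M"
    and measure_abs_gt_le_L2: "measure M {x\<in>space M. t < \<bar>u x\<bar>} \<le> (\<integral>x. (u x)^2 \<partial>M) / t^2"
proof -
  note bound = emeasure_abs_gt_le_L2[OF assms]
  show fm: "{x\<in>space M. t < \<bar>u x\<bar>} \<in> fmeasurable M"
    using bound by (intro fmeasurableI) (auto intro: le_less_trans)
  show "measure M {x\<in>space M. t < \<bar>u x\<bar>} \<le> (\<integral>x. (u x)^2 \<partial>M) / t^2"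
    using bound by (simp add: emeasure_eq_measure2[OF fm] ennreal_le_iff)
qed

lemma powr_le_dyadic_levels:
  fixes y t\<^sub>0 p :: real
  assumes "0 < t\<^sub>0" "1 < p"
  shows "ennreal (\<bar>y\<bar> powr (2*p)) \<le> ennreal (t\<^sub>0 powr (2*p - 2) * y^2)
     + (\<Sum>k. ennreal ((t\<^sub>0 * 2 powr (real k + 1)) powr (2*p))
          * indicator {z. t\<^sub>0 * 2 powr real k < z} \<bar>y\<bar>)"
proof (cases "\<bar>y\<bar> \<le> t\<^sub>0")
  case True
  have "\<bar>y\<bar> powr (2*p) \<le> t\<^sub>0 powr (2*p - 2) * y^2"
  proof (cases "y = 0")
    case False
    have "\<bar>y\<bar> powr (2*p) = \<bar>y\<bar> powr (2*p - 2) * \<bar>y\<bar> powr 2"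
      by (subst powr_add[symmetric]) simp
    also have "\<dots> \<le> t\<^sub>0 powr (2*p - 2) * y^2"
      using True False \<open>1 < p\<close> by (auto intro!: mult_right_mono powr_mono2 simp: powr_realpow)
    finally show ?thesis .
  qed (use \<open>1 < p\<close> in simp)
  then show ?thesis
    by (intro add_increasing2) auto
next
  case False
  define L where "L = log 2 (\<bar>y\<bar> / t\<^sub>0)"
  have "0 < L"
    using False \<open>0 < t\<^sub>0\<close> by (simp add: L_def)
  define k where "k = nat (\<lceil>L\<rceil> - 1)"
  have k: "real k < L" "L \<le> real k + 1"
    using \<open>0 < L\<close> ceiling_correct[of L] by (auto simp: k_def)
  have y: "\<bar>y\<bar> = t\<^sub>0 * 2 powr L"
    using False \<open>0 < t\<^sub>0\<close> by (simp add: L_def)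
  have lower: "t\<^sub>0 * 2 powr k < \<bar>y\<bar>"
    unfolding y using k \<open>0 < t\<^sub>0\<close> by (intro mult_strict_left_mono powr_less_mono) auto
  have upper: "\<bar>y\<bar> \<le> t\<^sub>0 * 2 powr (real k + 1)"
    unfolding y using k \<open>0 < t\<^sub>0\<close> by (intro mult_left_mono powr_mono) auto
  define b where
    "b j = ennreal ((t\<^sub>0 * 2 powr (real j + 1)) powr (2*p)) * indicator {z. t\<^sub>0 * 2 powr real j < z} \<bar>y\<bar>"
    for j :: nat
  have "\<bar>y\<bar> powr (2*p) \<le> (t\<^sub>0 * 2 powr (real k + 1)) powr (2*p)"
    using upper \<open>1 < p\<close> by (intro powr_mono2) auto
  then have "ennreal (\<bar>y\<bar> powr (2*p)) \<le> b k"
    using lower by (simp add: b_def ennreal_leI)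
  also have "\<dots> \<le> (\<Sum>j. b j)"
    using sum_le_suminf[of b "{k}"] by (simp add: summableI)
  finally show ?thesis
    unfolding b_def by (rule add_increasing[OF zero_le])
qed

lemma nn_integral_powr_le_dyadic_sum:
  fixes u :: "'a \<Rightarrow> real"
  assumes [measurable]: "u \<in> borel_measurable M" and L2: "integrable M (\<lambda>x. (u x)^2)"
    and "0 < t\<^sub>0" "1 < p"
  shows "(\<integral>\<^sup>+x. ennreal (\<bar>u x\<bar> powr (2*p)) \<partial>M)
     \<le> ennreal (t\<^sub>0 powr (2*p - 2) * (\<integral>x. (u x)^2 \<partial>M))
       + (\<Sum>k. ennreal ((t\<^sub>0 * 2 powr (real k + 1)) powr (2*p)
                        * measure M {x\<in>space M. t\<^sub>0 * 2 powr real k < \<bar>u x\<bar>}))"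
proof -
  define lev where "lev k = t\<^sub>0 * 2 powr real k" for k :: nat
  define b where "b k = (t\<^sub>0 * 2 powr (real k + 1)) powr (2*p)" for k :: nat
  have level_fm: "{x\<in>space M. lev k < \<bar>u x\<bar>} \<in> fmeasurable M" for k
    using fmeasurable_abs_gt[OF _ L2, of "lev k"] \<open>0 < t\<^sub>0\<close> by (simp add: lev_def)
  have "(\<integral>\<^sup>+x. ennreal (\<bar>u x\<bar> powr (2*p)) \<partial>M)
      \<le> (\<integral>\<^sup>+x. ennreal (t\<^sub>0 powr (2*p - 2) * (u x)^2)
             + (\<Sum>k. ennreal (b k) * indicator {x\<in>space M. lev k < \<bar>u x\<bar>} x) \<partial>M)"
    using powr_le_dyadic_levels[OF \<open>0 < t\<^sub>0\<close> \<open>1 < p\<close>]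
    by (intro nn_integral_mono) (simp add: b_def lev_def indicator_def)
  also have "\<dots> = (\<integral>\<^sup>+x. ennreal (t\<^sub>0 powr (2*p - 2) * (u x)^2) \<partial>M)
      + (\<integral>\<^sup>+x. (\<Sum>k. ennreal (b k) * indicator {x\<in>space M. lev k < \<bar>u x\<bar>} x) \<partial>M)"
    by (simp add: nn_integral_add)
  also have "(\<integral>\<^sup>+x. ennreal (t\<^sub>0 powr (2*p - 2) * (u x)^2) \<partial>M)
      = ennreal (t\<^sub>0 powr (2*p - 2) * (\<integral>x. (u x)^2 \<partial>M))"
    using L2 by (subst nn_integral_eq_integral) auto
  also have "(\<integral>\<^sup>+x. (\<Sum>k. ennreal (b k) * indicator {x\<in>space M. lev k < \<bar>u x\<bar>} x) \<partial>M)
      = (\<Sum>k. ennreal (b k * measure M {x\<in>space M. lev k < \<bar>u x\<bar>}))"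
    using level_fm
    by (simp add: nn_integral_suminf nn_integral_cmult_indicator emeasure_eq_measure2
        ennreal_mult b_def)
  finally show ?thesis
    by (simp add: b_def lev_def)
qed

lemma nn_integral_powr_le_of_level_decay:
  fixes u :: "'a \<Rightarrow> real"
  assumes [measurable]: "u \<in> borel_measurable M" and L2: "integrable M (\<lambda>x. (u x)^2)"
    and "0 < t\<^sub>0" "1 < p" "2*p < q" "0 \<le> D"
    and decay: "\<And>t. 0 < t \<Longrightarrow> measure M {x\<in>space M. t < \<bar>u x\<bar>} \<le> D / t powr q"
  shows "(\<integral>\<^sup>+x. ennreal (\<bar>u x\<bar> powr (2*p)) \<partial>M)
     \<le> ennreal (t\<^sub>0 powr (2*p - 2) * (\<integral>x. (u x)^2 \<partial>M)
                 + 2 powr (2*p) * D * t\<^sub>0 powr (2*p - q) / (1 - 2 powr (2*p - q)))"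
proof -
  define r where "r = 2 powr (2*p - q)"
  define c where "c = 2 powr (2*p) * D * t\<^sub>0 powr (2*p - q)"
  have "r < 2 powr 0"
    unfolding r_def using \<open>2*p < q\<close> by (intro powr_less_mono) auto
  then have r: "0 < r" "r < 1"
    by (auto simp: r_def)
  have "0 \<le> c"
    using \<open>0 \<le> D\<close> by (simp add: c_def)
  have level_term: "(t\<^sub>0 * 2 powr (real k + 1)) powr (2*p) * measure M {x\<in>space M. t\<^sub>0 * 2 powr real k < \<bar>u x\<bar>}
      \<le> c * r ^ k" for k
  proof -
    have "(t\<^sub>0 * 2 powr (real k + 1)) powr (2*p) * measure M {x\<in>space M. t\<^sub>0 * 2 powr real k < \<bar>u x\<bar>}
        \<le> (t\<^sub>0 * 2 powr (real k + 1)) powr (2*p) * (D / (t\<^sub>0 * 2 powr real k) powr q)"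
      using decay[of "t\<^sub>0 * 2 powr real k"] \<open>0 < t\<^sub>0\<close> by (intro mult_left_mono) auto
    also have "\<dots> = c * r ^ k"
      using \<open>0 < t\<^sub>0\<close>
      by (simp add: c_def r_def powr_mult powr_add powr_diff powr_powr
          powr_realpow[symmetric] field_simps)
    finally show ?thesis .
  qed
  have "(\<integral>\<^sup>+x. ennreal (\<bar>u x\<bar> powr (2*p)) \<partial>M)
      \<le> ennreal (t\<^sub>0 powr (2*p - 2) * (\<integral>x. (u x)^2 \<partial>M))
        + (\<Sum>k. ennreal ((t\<^sub>0 * 2 powr (real k + 1)) powr (2*p)
                         * measure M {x\<in>space M. t\<^sub>0 * 2 powr real k < \<bar>u x\<bar>}))"
    by (rule nn_integral_powr_le_dyadic_sum[OF assms(1) L2 \<open>0 < t\<^sub>0\<close> \<open>1 < p\<close>])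
  also have "\<dots> \<le> ennreal (t\<^sub>0 powr (2*p - 2) * (\<integral>x. (u x)^2 \<partial>M)) + (\<Sum>k. ennreal (c * r ^ k))"
    using level_term by (intro add_left_mono suminf_le ennreal_leI) auto
  also have "(\<Sum>k. ennreal (c * r ^ k)) = ennreal (c / (1 - r))"
    using \<open>0 \<le> c\<close> r geometric_sums[of r] sums_mult[of "\<lambda>k. r ^ k" _ c]
    by (intro suminf_ennreal_eq) (auto simp: divide_inverse)
  finally show ?thesis
    using \<open>0 \<le> c\<close> r by (simp add: ennreal_plus c_def r_def)
qed

section \<open>Iterating a level-set recursion\<close>

lemma power_decay_step:
  fixes f :: "real \<Rightarrow> real"
  assumes "0 < \<theta>" "0 < C" "0 < D" "0 < G" "0 < t"
    and nonneg: "\<And>t. 0 \<le> f t"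
    and recursion: "\<And>t. 0 < t \<Longrightarrow> f t \<le> C * G / t^2 * f (t/4) powr \<theta>"
    and decay: "\<And>t. 0 < t \<Longrightarrow> f t \<le> D * G powr ((q - 2) / (2*\<theta>)) / t powr q"
  shows "f t \<le> C * 4 powr (\<theta>*q) * D powr \<theta> * G powr (q/2) / t powr (2 + \<theta>*q)"
proof -
  have "f t \<le> C * G / t^2 * f (t/4) powr \<theta>"
    using recursion \<open>0 < t\<close> .
  also have "\<dots> \<le> C * G / t^2 * (D * G powr ((q - 2) / (2*\<theta>)) / (t/4) powr q) powr \<theta>"
    using decay[of "t/4"] nonneg assms(1-5) by (intro mult_left_mono powr_mono2) auto
  also have "(D * G powr ((q - 2) / (2*\<theta>)) / (t/4) powr q) powr \<theta>
      = D powr \<theta> * (G powr ((q - 2) / (2*\<theta>))) powr \<theta> * (4 powr q) powr \<theta> / (t powr q) powr \<theta>"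
    using assms(1-5) by (simp add: powr_divide powr_mult)
  also have "\<dots> = 4 powr (\<theta>*q) * D powr \<theta> * G powr ((q - 2) / 2) / t powr (\<theta>*q)"
    using \<open>0 < \<theta>\<close> by (simp add: powr_powr mult.commute)
  also have "C * G / t^2 * (4 powr (\<theta>*q) * D powr \<theta> * G powr ((q - 2) / 2) / t powr (\<theta>*q))
      = C * 4 powr (\<theta>*q) * D powr \<theta> * (G * G powr ((q - 2) / 2)) / (t^2 * t powr (\<theta>*q))"
    by simp
  also have "G * G powr ((q - 2) / 2) = G powr (q/2)"
    using \<open>0 < G\<close> powr_add[of G "(q - 2) / 2" 1] by (simp add: diff_divide_distrib)
  also have "t^2 * t powr (\<theta>*q) = t powr (2 + \<theta>*q)"
    using \<open>0 < t\<close> by (simp add: powr_add powr_realpow)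
  finally show ?thesis .
qed

lemma power_decay_iterate:
  fixes \<theta> A C :: real and n :: nat
  assumes "0 < \<theta>" "\<theta> < 1" "0 < A" "0 < C"
  defines "q \<equiv> \<lambda>n::nat. 2 * (1 - \<theta> ^ Suc n) / (1 - \<theta>)"
  shows "\<exists>D>0. \<forall>f G. 0 < G \<longrightarrow> (\<forall>t. 0 \<le> f t) \<longrightarrow> (\<forall>t>0. f t \<le> A / t^2)
      \<longrightarrow> (\<forall>t>0. f t \<le> C * G / t^2 * f (t/4) powr \<theta>)
      \<longrightarrow> (\<forall>t>0. f t \<le> D * G powr ((q n - 2) / (2*\<theta>)) / t powr q n)"
proof (induction n)
  case 0
  have "q 0 = 2"
    using \<open>\<theta> < 1\<close> by (simp add: q_def field_simps)
  then show ?case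
    using \<open>0 < A\<close> by (auto simp: powr_realpow)
next
  case (Suc n)
  then obtain D where "0 < D" and decay: "\<forall>f G. 0 < G \<longrightarrow> (\<forall>t. 0 \<le> f t) \<longrightarrow> (\<forall>t>0. f t \<le> A / t^2)
      \<longrightarrow> (\<forall>t>0. f t \<le> C * G / t^2 * f (t/4) powr \<theta>)
      \<longrightarrow> (\<forall>t>0. f t \<le> D * G powr ((q n - 2) / (2*\<theta>)) / t powr q n)"
    by blast
  have q_Suc: "q (Suc n) = 2 + \<theta> * q n"
    using \<open>\<theta> < 1\<close> by (simp add: q_def field_simps)
  have exponent: "(q (Suc n) - 2) / (2*\<theta>) = q n / 2"
    using \<open>0 < \<theta>\<close> by (simp add: q_Suc)
  show ?case
  proof (intro exI[of _ "C * 4 powr (\<theta> * q n) * D powr \<theta>"] conjI allI impI)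
    show "0 < C * 4 powr (\<theta> * q n) * D powr \<theta>"
      using \<open>0 < C\<close> \<open>0 < D\<close> by simp
    fix f :: "real \<Rightarrow> real" and G t :: real
    assume "0 < G" and nonneg: "\<forall>t. 0 \<le> f t" and base: "\<forall>t>0. f t \<le> A / t^2"
      and recursion: "\<forall>t>0. f t \<le> C * G / t^2 * f (t/4) powr \<theta>" and "0 < t"
    have "\<forall>t>0. f t \<le> D * G powr ((q n - 2) / (2*\<theta>)) / t powr q n"
      using decay \<open>0 < G\<close> nonneg base recursion by blast
    then show "f t \<le> C * 4 powr (\<theta> * q n) * D powr \<theta> * G powr ((q (Suc n) - 2) / (2*\<theta>))
        / t powr q (Suc n)"
      unfolding exponent unfolding q_Suc
      by (intro power_decay_step[OF \<open>0 < \<theta>\<close> \<open>0 < C\<close> \<open>0 < D\<close> \<open>0 < G\<close> \<open>0 < t\<close>])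
        (use nonneg recursion in auto)
  qed
qed

lemma uniform_power_decay:
  fixes \<theta> A C q\<^sub>0 :: real
  assumes "0 < \<theta>" "\<theta> < 1" "0 < A" "0 < C" "q\<^sub>0 < 2 / (1 - \<theta>)"
  obtains q D where "q\<^sub>0 < q" "0 < D"
    "\<And>f G t. 0 < G \<Longrightarrow> (\<And>t. 0 \<le> f t) \<Longrightarrow> (\<And>t. 0 < t \<Longrightarrow> f t \<le> A / t^2)
       \<Longrightarrow> (\<And>t. 0 < t \<Longrightarrow> f t \<le> C * G / t^2 * f (t/4) powr \<theta>) \<Longrightarrow> 0 < t
       \<Longrightarrow> f t \<le> D * G powr ((q - 2) / (2*\<theta>)) / t powr q"
proof -
  have "0 < 1 - q\<^sub>0 * (1 - \<theta>) / 2"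
    using assms(2,5) by (simp add: field_simps)
  then obtain n where n: "\<theta> ^ n < 1 - q\<^sub>0 * (1 - \<theta>) / 2"
    using real_arch_pow_inv \<open>\<theta> < 1\<close> by blast
  have "\<theta> ^ Suc n \<le> \<theta> ^ n"
    using assms(1,2) by (intro power_decreasing) auto
  define q where "q = 2 * (1 - \<theta> ^ Suc n) / (1 - \<theta>)"
  have "q\<^sub>0 < q"
    using n \<open>\<theta> ^ Suc n \<le> \<theta> ^ n\<close> \<open>\<theta> < 1\<close> by (simp add: q_def field_simps)
  obtain D where "0 < D" and decay: "\<forall>f G. 0 < G \<longrightarrow> (\<forall>t. 0 \<le> f t)
      \<longrightarrow> (\<forall>t>0. f t \<le> A / t^2) \<longrightarrow> (\<forall>t>0. f t \<le> C * G / t^2 * f (t/4) powr \<theta>)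
      \<longrightarrow> (\<forall>t>0. f t \<le> D * G powr ((q - 2) / (2*\<theta>)) / t powr q)"
    using power_decay_iterate[OF assms(1-4), of n] unfolding q_def by blast
  show ?thesis
  proof (rule that[OF \<open>q\<^sub>0 < q\<close> \<open>0 < D\<close>])
    fix f :: "real \<Rightarrow> real" and G t :: real
    assume "0 < G" "\<And>t. 0 \<le> f t" "\<And>t. 0 < t \<Longrightarrow> f t \<le> A / t^2"
      "\<And>t. 0 < t \<Longrightarrow> f t \<le> C * G / t^2 * f (t/4) powr \<theta>" "0 < t"
    then show "f t \<le> D * G powr ((q - 2) / (2*\<theta>)) / t powr q"
      using decay by blast
  qed
qed

section \<open>Level sets and the Gagliardo seminorm\<close>

lemma gagliardo_kernel_ge:
  fixes u :: "'a::real_normed_vector \<Rightarrow> real"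
  assumes "0 < t" "0 \<le> e" "t < \<bar>u x\<bar>" "\<bar>u y\<bar> \<le> t/4" "dist x y < R"
  shows "(t/2)^2 / R powr e \<le> (u x - u y)^2 / norm (x - y) powr e"
proof -
  have "t/2 \<le> \<bar>u x - u y\<bar>"
    using assms(3,4) by linarith
  then have "(t/2)^2 \<le> (u x - u y)^2"
    using \<open>0 < t\<close> by (metis abs_of_pos half_gt_zero power2_abs power_mono abs_ge_zero)
  moreover have "x \<noteq> y"
    using assms(1,3,4) by auto
  moreover have "norm (x - y) powr e \<le> R powr e"
    using assms(2,5) by (intro powr_mono2) (auto simp: dist_norm)
  ultimately show ?thesis
    by (intro frac_le) auto
qed

lemma measure_ball_diff_ge:
  fixes x :: "'a::euclidean_space"
  assumes P: "P \<in> fmeasurable lborel" and "0 \<le> R"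
  shows "unit_ball_vol (real DIM('a)) * R ^ DIM('a) - measure lborel P \<le> measure lborel (ball x R - P)"
proof -
  have [measurable]: "P \<in> sets lborel"
    using P by (simp add: fmeasurable_def)
  have "measure lborel (ball x R) = measure lborel ((ball x R - P) \<union> (ball x R \<inter> P))"
    by (metis Un_Diff_Int)
  also have "\<dots> \<le> measure lborel (ball x R - P) + measure lborel (ball x R \<inter> P)"
    by (intro measure_Un_le) measurable
  also have "measure lborel (ball x R \<inter> P) \<le> measure lborel P"
    using P by (intro measure_mono_fmeasurable) auto
  finally show ?thesis
    using content_ball[where c = x and r = R] \<open>0 \<le> R\<close> by simp
qed

lemma nn_integral_gagliardo_kernel_ge:
  fixes u :: "real^'n \<Rightarrow> real"
  assumes [measurable]: "u \<in> borel_measurable lborel"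
    and "0 < t" "0 < R" "0 < s" "t < \<bar>u x\<bar>"
    and fin: "{x. t/4 < \<bar>u x\<bar>} \<in> fmeasurable lborel"
  shows "ennreal ((t/2)^2 / R powr (real CARD('n) + 2 * s)
            * (unit_ball_vol (real CARD('n)) * R ^ CARD('n) - measure lborel {x. t/4 < \<bar>u x\<bar>}))
    \<le> (\<integral>\<^sup>+y. ennreal ((u x - u y)^2 / norm (x - y) powr (real CARD('n) + 2 * s)) \<partial>lborel)"
proof -
  define e where "e = real CARD('n) + 2 * s"
  define c where "c = (t/2)^2 / R powr e"
  define P where "P = {x. t/4 < \<bar>u x\<bar>}"
  have P_fm: "P \<in> fmeasurable lborel"
    using fin by (simp add: P_def)
  then have [measurable]: "P \<in> sets lborel"
    by (simp add: fmeasurable_def)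
  have "0 \<le> c"
    by (simp add: c_def)
  have "ball x R \<in> fmeasurable lborel"
    using emeasure_lborel_ball_finite[of x R] by (intro fmeasurableI) auto
  then have "ball x R - P \<in> fmeasurable lborel"
    by (rule fmeasurableI2) (blast, measurable)
  have kernel: "c \<le> (u x - u y)^2 / norm (x - y) powr e" if "y \<in> ball x R - P" for y
    unfolding c_def using that \<open>0 < s\<close>
    by (intro gagliardo_kernel_ge[where u = u]) (auto simp: e_def P_def \<open>0 < t\<close> \<open>t < \<bar>u x\<bar>\<close>)
  have "c * (unit_ball_vol (real CARD('n)) * R ^ CARD('n) - measure lborel P)
      \<le> c * measure lborel (ball x R - P)"
    using measure_ball_diff_ge[OF P_fm, of R x] \<open>0 < R\<close> \<open>0 \<le> c\<close> by (intro mult_left_mono) auto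
  then have "ennreal (c * (unit_ball_vol (real CARD('n)) * R ^ CARD('n) - measure lborel P))
      \<le> ennreal c * emeasure lborel (ball x R - P)"
    using \<open>ball x R - P \<in> fmeasurable lborel\<close> \<open>0 \<le> c\<close>
    by (simp add: emeasure_eq_measure2 ennreal_leI flip: ennreal_mult)
  also have "\<dots> = (\<integral>\<^sup>+y. ennreal c * indicator (ball x R - P) y \<partial>lborel)"
    by (rule nn_integral_cmult_indicator[symmetric]) measurable
  also have "\<dots> \<le> (\<integral>\<^sup>+y. ennreal ((u x - u y)^2 / norm (x - y) powr e) \<partial>lborel)"
    using kernel by (intro nn_integral_mono) (simp add: indicator_def ennreal_leI)
  finally show ?thesis
    by (simp add: c_def e_def P_def)
qed

lemma gagliardo_ge_level_sets:
  fixes u :: "real^'n \<Rightarrow> real"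
  assumes [measurable]: "u \<in> borel_measurable lborel"
    and "0 < t" "0 < R" "0 < s"
    and fin: "{x. t/4 < \<bar>u x\<bar>} \<in> fmeasurable lborel"
  shows "ennreal ((t/2)^2 / R powr (real CARD('n) + 2 * s)
            * (unit_ball_vol (real CARD('n)) * R ^ CARD('n) - measure lborel {x. t/4 < \<bar>u x\<bar>}))
           * emeasure lborel {x. t < \<bar>u x\<bar>} \<le> gagliardo s u"
proof -
  define c where "c = (t/2)^2 / R powr (real CARD('n) + 2 * s)
    * (unit_ball_vol (real CARD('n)) * R ^ CARD('n) - measure lborel {x. t/4 < \<bar>u x\<bar>})"
  have "ennreal c * emeasure lborel {x. t < \<bar>u x\<bar>}
      = (\<integral>\<^sup>+x. ennreal c * indicator {x. t < \<bar>u x\<bar>} x \<partial>lborel)"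
    by (rule nn_integral_cmult_indicator[symmetric]) measurable
  also have "\<dots> \<le> (\<integral>\<^sup>+x. \<integral>\<^sup>+y. ennreal ((u x - u y)^2 / norm (x - y) powr (real CARD('n) + 2 * s))
      \<partial>lborel \<partial>lborel)"
    using nn_integral_gagliardo_kernel_ge[OF _ \<open>0 < t\<close> \<open>0 < R\<close> \<open>0 < s\<close> _ fin]
    by (intro nn_integral_mono) (simp add: c_def indicator_def)
  also have "\<dots> = gagliardo s u"
    by (simp add: gagliardo_def)
  finally show ?thesis
    by (simp add: c_def)
qed

lemma level_set_recursion:
  fixes u :: "real^'n \<Rightarrow> real"
  assumes [measurable]: "u \<in> borel_measurable lborel" and L2: "integrable lborel (\<lambda>x. (u x)^2)"
    and "0 < s" "0 < t" and gag: "gagliardo s u \<le> ennreal G" and "0 \<le> G"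
  defines "\<omega> \<equiv> unit_ball_vol (real CARD('n))" and "\<theta> \<equiv> 2 * s / real CARD('n)"
  shows "measure lborel {x. t < \<bar>u x\<bar>}
    \<le> 8 * (2/\<omega>) powr \<theta> / \<omega> * G / t^2 * measure lborel {x. t/4 < \<bar>u x\<bar>} powr \<theta>"
proof -
  define N where "N = real CARD('n)"
  define m where "m = measure lborel {x. t/4 < \<bar>u x\<bar>}"
  define E where "E = {x. t < \<bar>u x\<bar>}"
  have "0 < \<omega>" "0 < N"
    by (simp_all add: \<omega>_def N_def)
  have level_fm: "{x. r < \<bar>u x\<bar>} \<in> fmeasurable lborel" if "0 < r" for r
    using fmeasurable_abs_gt[OF _ L2 that] by simp
  have "measure lborel E \<le> m"
    unfolding E_def m_def using \<open>0 < t\<close> level_fm[of "t/4"]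
    by (intro measure_mono_fmeasurable) auto
  show ?thesis
  proof (cases "m = 0")
    case True
    with \<open>measure lborel E \<le> m\<close> show ?thesis
      by (simp add: E_def m_def)
  next
    case False
    then have "0 < m"
      by (simp add: m_def order_less_le)
    define R where "R = (2 * m / \<omega>) powr (1/N)"
    have "0 < R"
      using \<open>0 < m\<close> \<open>0 < \<omega>\<close> by (simp add: R_def)
    have R_N: "R ^ CARD('n) = 2 * m / \<omega>"
      using \<open>0 < R\<close> \<open>0 < m\<close> \<open>0 < \<omega>\<close> \<open>0 < N\<close>
      by (simp add: R_def N_def powr_realpow[symmetric] powr_powr)
    have R_pow: "R powr (N + 2 * s) = 2 * m / \<omega> * ((2/\<omega>) powr \<theta> * m powr \<theta>)"
    proof -
      have "R powr (2 * s) = (2 * m / \<omega>) powr \<theta>"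
        using \<open>0 < N\<close> by (simp add: R_def \<theta>_def N_def powr_powr)
      also have "\<dots> = (2/\<omega>) powr \<theta> * m powr \<theta>"
        using \<open>0 < m\<close> \<open>0 < \<omega>\<close> by (simp add: powr_mult[symmetric])
      finally show ?thesis
        using \<open>0 < R\<close> R_N by (simp add: powr_add N_def powr_realpow)
    qed
    define c where "c = (t/2)^2 / R powr (N + 2 * s) * (\<omega> * R ^ CARD('n) - m)"
    have c: "c = t^2 * \<omega> / (8 * (2/\<omega>) powr \<theta> * m powr \<theta>)"
      unfolding c_def R_pow R_N using \<open>0 < m\<close> \<open>0 < \<omega>\<close> by (simp add: field_simps power2_eq_square)
    have "0 < c"
      unfolding c using \<open>0 < t\<close> \<open>0 < \<omega>\<close> \<open>0 < m\<close> by simp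
    have "ennreal c * emeasure lborel E \<le> ennreal G"
      using gagliardo_ge_level_sets[OF _ \<open>0 < t\<close> \<open>0 < R\<close> \<open>0 < s\<close> level_fm] gag \<open>0 < t\<close>
      by (simp add: c_def E_def m_def N_def \<omega>_def)
    then have "c * measure lborel E \<le> G"
      using level_fm[OF \<open>0 < t\<close>] \<open>0 < c\<close> \<open>0 \<le> G\<close>
      by (simp add: E_def emeasure_eq_measure2 ennreal_mult[symmetric])
    then show ?thesis
      unfolding c using \<open>0 < t\<close> \<open>0 < \<omega>\<close> \<open>0 < m\<close>
      by (simp add: E_def m_def field_simps)
  qed
qed

lemma gagliardo_pos:
  fixes u :: "real^'n \<Rightarrow> real"
  assumes [measurable]: "u \<in> borel_measurable lborel" and L2: "integrable lborel (\<lambda>x. (u x)^2)"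
    and "0 < s" and "0 < (\<integral>x. (u x)^2 \<partial>lborel)"
  shows "0 < gagliardo s u"
proof (rule ccontr)
  assume "\<not> 0 < gagliardo s u"
  then have "gagliardo s u \<le> ennreal 0"
    by (simp add: not_less)
  have null: "{x. t < \<bar>u x\<bar>} \<in> null_sets lborel" if "0 < t" for t
  proof -
    have "measure lborel {x. t < \<bar>u x\<bar>} = 0"
      using level_set_recursion[OF _ L2 \<open>0 < s\<close> that \<open>gagliardo s u \<le> ennreal 0\<close>]
      by (simp add: antisym)
    then show ?thesis
      using fmeasurable_abs_gt[OF _ L2 that]
      by (intro null_setsI) (auto simp: emeasure_eq_measure2)
  qed
  have "{x. u x \<noteq> 0} = (\<Union>k. {x. 1 / Suc k < \<bar>u x\<bar>})"
  proof safe
    fix x assume "u x \<noteq> 0"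
    then obtain k where "1 / Suc k < \<bar>u x\<bar>"
      using reals_Archimedean[of "\<bar>u x\<bar>"] by (auto simp: inverse_eq_divide)
    then show "x \<in> (\<Union>k. {x. 1 / Suc k < \<bar>u x\<bar>})"
      by blast
  qed auto
  moreover have "(\<Union>k. {x. 1 / Suc k < \<bar>u x\<bar>}) \<in> null_sets lborel"
    using null by (intro null_sets_UN) simp
  ultimately have "AE x in lborel. (u x)^2 = 0"
    by (intro AE_I'[of "{x. u x \<noteq> 0}"]) auto
  then have "(\<integral>x. (u x)^2 \<partial>lborel) = 0"
    by (rule integral_eq_zero_AE)
  with \<open>0 < (\<integral>x. (u x)^2 \<partial>lborel)\<close> show False
    by simp
qed

lemma level_set_power_decay:
  fixes s A q\<^sub>0 :: real
  assumes "0 < s" "2 * s < real CARD('n)" "0 < A"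
    and "q\<^sub>0 < 2 * real CARD('n) / (real CARD('n) - 2 * s)"
  obtains q D where "q\<^sub>0 < q" "0 < D"
    "\<And>(u :: real^'n \<Rightarrow> real) G t. u \<in> borel_measurable lborel \<Longrightarrow> integrable lborel (\<lambda>x. (u x)^2)
       \<Longrightarrow> (\<integral>x. (u x)^2 \<partial>lborel) \<le> A \<Longrightarrow> gagliardo s u \<le> ennreal G \<Longrightarrow> 0 < G \<Longrightarrow> 0 < t
       \<Longrightarrow> measure lborel {x. t < \<bar>u x\<bar>} \<le> D * G powr ((q - 2) * real CARD('n) / (4 * s)) / t powr q"
proof -
  define N where "N = real CARD('n)"
  define \<theta> where "\<theta> = 2 * s / N"
  define \<omega> where "\<omega> = unit_ball_vol N"
  define C where "C = 8 * (2/\<omega>) powr \<theta> / \<omega>"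
  have "0 < N" "0 < \<omega>"
    by (simp_all add: N_def \<omega>_def)
  have "0 < \<theta>" "\<theta> < 1"
    using assms(1,2) \<open>0 < N\<close> by (simp_all add: \<theta>_def N_def)
  have "0 < C"
    using \<open>0 < \<omega>\<close> by (simp add: C_def)
  have "q\<^sub>0 < 2 / (1 - \<theta>)"
    using assms(2,4) \<open>0 < N\<close> by (simp add: \<theta>_def N_def field_simps)
  obtain q D where "q\<^sub>0 < q" "0 < D" and decay:
    "\<And>f G t. 0 < G \<Longrightarrow> (\<And>t. 0 \<le> f t) \<Longrightarrow> (\<And>t. 0 < t \<Longrightarrow> f t \<le> A / t^2)
       \<Longrightarrow> (\<And>t. 0 < t \<Longrightarrow> f t \<le> C * G / t^2 * f (t/4) powr \<theta>) \<Longrightarrow> 0 < t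
       \<Longrightarrow> f t \<le> D * G powr ((q - 2) / (2*\<theta>)) / t powr q"
    using uniform_power_decay[OF \<open>0 < \<theta>\<close> \<open>\<theta> < 1\<close> \<open>0 < A\<close> \<open>0 < C\<close> \<open>q\<^sub>0 < 2 / (1 - \<theta>)\<close>]
    by blast
  have exponent: "(q - 2) / (2*\<theta>) = (q - 2) * real CARD('n) / (4 * s)"
    by (simp add: \<theta>_def N_def)
  show ?thesis
  proof (rule that[OF \<open>q\<^sub>0 < q\<close> \<open>0 < D\<close>], unfold exponent[symmetric])
    fix u :: "real^'n \<Rightarrow> real" and G t :: real
    assume [measurable]: "u \<in> borel_measurable lborel" and L2: "integrable lborel (\<lambda>x. (u x)^2)"
      and mass: "(\<integral>x. (u x)^2 \<partial>lborel) \<le> A" and gag: "gagliardo s u \<le> ennreal G"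
      and "0 < G" "0 < t"
    show "measure lborel {x. t < \<bar>u x\<bar>} \<le> D * G powr ((q - 2) / (2*\<theta>)) / t powr q"
    proof (rule decay[OF \<open>0 < G\<close> _ _ _ \<open>0 < t\<close>])
      fix t :: real assume "0 < t"
      have "measure lborel {x. t < \<bar>u x\<bar>} \<le> (\<integral>x. (u x)^2 \<partial>lborel) / t^2"
        using measure_abs_gt_le_L2[OF _ L2 \<open>0 < t\<close>] by simp
      also have "\<dots> \<le> A / t^2"
        using mass by (simp add: divide_right_mono)
      finally show "measure lborel {x. t < \<bar>u x\<bar>} \<le> A / t^2" .
      show "measure lborel {x. t < \<bar>u x\<bar>}
          \<le> C * G / t^2 * measure lborel {x. t/4 < \<bar>u x\<bar>} powr \<theta>"
        using level_set_recursion[OF _ L2 \<open>0 < s\<close> \<open>0 < t\<close> gag] \<open>0 < G\<close>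
        by (simp add: C_def \<omega>_def \<theta>_def N_def)
    qed simp
  qed
qed

lemma gagliardo_nirenberg_powr:
  fixes s p A :: real
  assumes "0 < s" "2 * s < real CARD('n)" "1 < p" "p * (real CARD('n) - 2 * s) < real CARD('n)"
    and "0 < A"
  obtains C where "0 < C"
    "\<And>(u :: real^'n \<Rightarrow> real) G. u \<in> borel_measurable lborel \<Longrightarrow> integrable lborel (\<lambda>x. (u x)^2)
       \<Longrightarrow> (\<integral>x. (u x)^2 \<partial>lborel) \<le> A \<Longrightarrow> gagliardo s u \<le> ennreal G \<Longrightarrow> 0 < G
       \<Longrightarrow> (\<integral>\<^sup>+x. ennreal (\<bar>u x\<bar> powr (2*p)) \<partial>lborel)
           \<le> ennreal (C * G powr ((p - 1) * real CARD('n) / (2 * s)))"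
proof -
  define N where "N = real CARD('n)"
  define \<gamma> where "\<gamma> = (p - 1) * N / (2 * s)"
  have "2 * p < 2 * N / (N - 2 * s)"
    using assms(2,4) by (simp add: N_def field_simps)
  then obtain q D where "2 * p < q" "0 < D" and decay:
    "\<And>(u :: real^'n \<Rightarrow> real) G t. u \<in> borel_measurable lborel \<Longrightarrow> integrable lborel (\<lambda>x. (u x)^2)
       \<Longrightarrow> (\<integral>x. (u x)^2 \<partial>lborel) \<le> A \<Longrightarrow> gagliardo s u \<le> ennreal G \<Longrightarrow> 0 < G \<Longrightarrow> 0 < t
       \<Longrightarrow> measure lborel {x. t < \<bar>u x\<bar>} \<le> D * G powr ((q - 2) * N / (4 * s)) / t powr q"
    using level_set_power_decay[OF assms(1,2,5)] unfolding N_def by blast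
  define r where "r = 2 powr (2*p - q)"
  have "r < 2 powr 0"
    unfolding r_def using \<open>2 * p < q\<close> by (intro powr_less_mono) auto
  then have "r < 1"
    by simp
  define C where "C = A + 2 powr (2*p) * D / (1 - r)"
  show ?thesis
  proof (rule that, unfold N_def[symmetric] \<gamma>_def[symmetric])
    show "0 < C"
      using \<open>0 < A\<close> \<open>0 < D\<close> \<open>r < 1\<close> unfolding C_def
      by (intro add_pos_nonneg divide_nonneg_pos) auto
    fix u :: "real^'n \<Rightarrow> real" and G :: real
    assume [measurable]: "u \<in> borel_measurable lborel" and L2: "integrable lborel (\<lambda>x. (u x)^2)"
      and mass: "(\<integral>x. (u x)^2 \<partial>lborel) \<le> A" and gag: "gagliardo s u \<le> ennreal G" and "0 < G"
    define t\<^sub>0 where "t\<^sub>0 = G powr (N / (4 * s))"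
    have "0 < t\<^sub>0"
      using \<open>0 < G\<close> by (simp add: t\<^sub>0_def)
    have "N / (4 * s) * (2*p - 2) = \<gamma>"
      using \<open>0 < s\<close> by (simp add: \<gamma>_def field_simps)
    then have t\<^sub>0_pow: "t\<^sub>0 powr (2*p - 2) = G powr \<gamma>"
      by (simp only: t\<^sub>0_def powr_powr)
    have "(q - 2) * N / (4 * s) + N / (4 * s) * (2*p - q) = \<gamma>"
      using \<open>0 < s\<close> by (simp add: \<gamma>_def field_simps)
    then have G_t\<^sub>0_pow: "G powr ((q - 2) * N / (4 * s)) * t\<^sub>0 powr (2*p - q) = G powr \<gamma>"
      by (simp only: t\<^sub>0_def powr_powr powr_add[symmetric])
    have "(\<integral>\<^sup>+x. ennreal (\<bar>u x\<bar> powr (2*p)) \<partial>lborel)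
        \<le> ennreal (t\<^sub>0 powr (2*p - 2) * (\<integral>x. (u x)^2 \<partial>lborel)
            + 2 powr (2*p) * (D * G powr ((q - 2) * N / (4 * s))) * t\<^sub>0 powr (2*p - q) / (1 - r))"
      unfolding r_def
      using \<open>0 < t\<^sub>0\<close> \<open>1 < p\<close> \<open>2 * p < q\<close> \<open>0 < D\<close> decay[OF _ L2 mass gag \<open>0 < G\<close>]
      by (intro nn_integral_powr_le_of_level_decay[OF _ L2]) auto
    also have "\<dots> = ennreal (G powr \<gamma> * (\<integral>x. (u x)^2 \<partial>lborel) + 2 powr (2*p) * D / (1 - r) * G powr \<gamma>)"
      unfolding t\<^sub>0_pow G_t\<^sub>0_pow[symmetric] by (simp add: mult_ac)
    also have "\<dots> \<le> ennreal (C * G powr \<gamma>)"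
      using mult_left_mono[OF mass, of "G powr \<gamma>"] by (intro ennreal_leI) (simp add: C_def algebra_simps)
    finally show "(\<integral>\<^sup>+x. ennreal (\<bar>u x\<bar> powr (2*p)) \<partial>lborel) \<le> ennreal (C * G powr \<gamma>)" .
  qed
qed

lemma gagliardo_nirenberg_frac_grad_sq:
  fixes s p A :: real
  assumes "0 < s" "s < 1" "2 * s < real CARD('n)" "1 < p"
    and "p * (real CARD('n) - 2 * s) < real CARD('n)" "0 < A"
  obtains C where "0 < C"
    "\<And>u :: real^'n \<Rightarrow> real. u \<in> Hs s \<Longrightarrow> 0 < (\<integral>x. (u x)^2 \<partial>lborel) \<Longrightarrow> (\<integral>x. (u x)^2 \<partial>lborel) \<le> A
       \<Longrightarrow> 0 < frac_grad_sq s u \<and> (\<integral>\<^sup>+x. ennreal (\<bar>u x\<bar> powr (2*p)) \<partial>lborel)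
             \<le> ennreal (C * frac_grad_sq s u powr ((p - 1) * real CARD('n) / (2 * s)))"
proof -
  define \<gamma> where "\<gamma> = (p - 1) * real CARD('n) / (2 * s)"
  define c where "c = frac_const (real CARD('n)) s / 2"
  have "0 < Gamma ((real CARD('n) + 2 * s) / 2)" "0 < Gamma (1 - s)"
    using assms(1,2) by (auto intro: add_pos_pos)
  then have "0 < c"
    using \<open>0 < s\<close> by (simp add: c_def frac_const_def)
  obtain C where "0 < C" and GN:
    "\<And>(u :: real^'n \<Rightarrow> real) G. u \<in> borel_measurable lborel \<Longrightarrow> integrable lborel (\<lambda>x. (u x)^2)
       \<Longrightarrow> (\<integral>x. (u x)^2 \<partial>lborel) \<le> A \<Longrightarrow> gagliardo s u \<le> ennreal G \<Longrightarrow> 0 < G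
       \<Longrightarrow> (\<integral>\<^sup>+x. ennreal (\<bar>u x\<bar> powr (2*p)) \<partial>lborel) \<le> ennreal (C * G powr \<gamma>)"
    using gagliardo_nirenberg_powr[OF assms(1,3-6)] unfolding \<gamma>_def by blast
  show ?thesis
  proof (rule that[of "C / c powr \<gamma>"])
    show "0 < C / c powr \<gamma>"
      using \<open>0 < C\<close> \<open>0 < c\<close> by simp
    fix u :: "real^'n \<Rightarrow> real"
    assume "u \<in> Hs s" "0 < (\<integral>x. (u x)^2 \<partial>lborel)" "(\<integral>x. (u x)^2 \<partial>lborel) \<le> A"
    then have [measurable]: "u \<in> borel_measurable lborel" and L2: "integrable lborel (\<lambda>x. (u x)^2)"
      and "gagliardo s u < \<infinity>"
      by (simp_all add: Hs_def)
    define G where "G = enn2real (gagliardo s u)"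
    have "gagliardo s u = ennreal G"
      using \<open>gagliardo s u < \<infinity>\<close> by (simp add: G_def ennreal_enn2real_if)
    moreover have "0 < G"
      using gagliardo_pos[OF _ L2 \<open>0 < s\<close>] \<open>0 < (\<integral>x. (u x)^2 \<partial>lborel)\<close> \<open>gagliardo s u < \<infinity>\<close>
      by (simp add: G_def enn2real_positive_iff)
    moreover have "frac_grad_sq s u = c * G"
      by (simp add: frac_grad_sq_def c_def G_def)
    ultimately show "0 < frac_grad_sq s u \<and> (\<integral>\<^sup>+x. ennreal (\<bar>u x\<bar> powr (2*p)) \<partial>lborel)
        \<le> ennreal (C / c powr \<gamma> * frac_grad_sq s u powr ((p - 1) * real CARD('n) / (2 * s)))"
      using GN[OF _ L2 \<open>(\<integral>x. (u x)^2 \<partial>lborel) \<le> A\<close>] \<open>0 < c\<close> by (simp add: powr_mult \<gamma>_def)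
  qed
qed

section \<open>Energy estimates\<close>

lemma powr_cross_le:
  fixes a b p :: real
  shows "2 * (\<bar>a\<bar> powr p * \<bar>b\<bar> powr p) \<le> \<bar>a\<bar> powr (2*p) + \<bar>b\<bar> powr (2*p)"
proof -
  have square: "\<bar>x\<bar> powr (2*p) = (\<bar>x\<bar> powr p)^2" for x :: real
    by (cases "x = 0") (simp_all add: powr_power)
  show ?thesis
    unfolding square using sum_squares_bound[of "\<bar>a\<bar> powr p" "\<bar>b\<bar> powr p"] by simp
qed

lemma energy_le_half_grad:
  assumes "0 < p" "0 \<le> \<mu>1" "0 \<le> \<mu>2" "0 \<le> \<beta>"
  shows "energy s p \<mu>1 \<mu>2 \<beta> u v \<le> (frac_grad_sq s u + frac_grad_sq s v) / 2"
proof -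
  have "0 \<le> (\<integral>x. \<mu>1 * \<bar>u x\<bar> powr (2*p) + 2*\<beta> * \<bar>u x\<bar> powr p * \<bar>v x\<bar> powr p
      + \<mu>2 * \<bar>v x\<bar> powr (2*p) \<partial>lborel)"
    using assms by (intro integral_nonneg_AE) auto
  then have "0 \<le> 1 / (2*p) * (\<integral>x. \<mu>1 * \<bar>u x\<bar> powr (2*p) + 2*\<beta> * \<bar>u x\<bar> powr p * \<bar>v x\<bar> powr p
      + \<mu>2 * \<bar>v x\<bar> powr (2*p) \<partial>lborel)"
    using \<open>0 < p\<close> by simp
  then show ?thesis
    unfolding energy_def by linarith
qed

lemma half_grad_minus_le_energy:
  fixes u v :: "real^'n \<Rightarrow> real"
  assumes [measurable]: "u \<in> borel_measurable lborel" "v \<in> borel_measurable lborel"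
    and "0 < p" "0 \<le> \<mu>1" "0 \<le> \<mu>2" "0 \<le> \<beta>" "0 \<le> I\<^sub>u" "0 \<le> I\<^sub>v"
    and I\<^sub>u: "(\<integral>\<^sup>+x. ennreal (\<bar>u x\<bar> powr (2*p)) \<partial>lborel) \<le> ennreal I\<^sub>u"
    and I\<^sub>v: "(\<integral>\<^sup>+x. ennreal (\<bar>v x\<bar> powr (2*p)) \<partial>lborel) \<le> ennreal I\<^sub>v"
  shows "(frac_grad_sq s u + frac_grad_sq s v) / 2 - ((\<mu>1 + \<beta>) * I\<^sub>u + (\<mu>2 + \<beta>) * I\<^sub>v) / (2*p)
    \<le> energy s p \<mu>1 \<mu>2 \<beta> u v"
proof -
  define F where "F x = \<mu>1 * \<bar>u x\<bar> powr (2*p) + 2*\<beta> * \<bar>u x\<bar> powr p * \<bar>v x\<bar> powr p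
    + \<mu>2 * \<bar>v x\<bar> powr (2*p)" for x
  have F_nonneg: "0 \<le> F x" for x
    using assms(4-6) by (simp add: F_def)
  have F_le: "F x \<le> (\<mu>1 + \<beta>) * \<bar>u x\<bar> powr (2*p) + (\<mu>2 + \<beta>) * \<bar>v x\<bar> powr (2*p)" for x
    using mult_left_mono[OF powr_cross_le[of "u x" p "v x"] \<open>0 \<le> \<beta>\<close>]
    by (simp add: F_def algebra_simps)
  have "(\<integral>\<^sup>+x. ennreal (F x) \<partial>lborel)
      \<le> (\<integral>\<^sup>+x. ennreal (\<mu>1 + \<beta>) * ennreal (\<bar>u x\<bar> powr (2*p))
             + ennreal (\<mu>2 + \<beta>) * ennreal (\<bar>v x\<bar> powr (2*p)) \<partial>lborel)"
    using F_le assms(4-6)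
    by (intro nn_integral_mono) (simp add: ennreal_leI flip: ennreal_plus ennreal_mult)
  also have "\<dots> = ennreal (\<mu>1 + \<beta>) * (\<integral>\<^sup>+x. ennreal (\<bar>u x\<bar> powr (2*p)) \<partial>lborel)
      + ennreal (\<mu>2 + \<beta>) * (\<integral>\<^sup>+x. ennreal (\<bar>v x\<bar> powr (2*p)) \<partial>lborel)"
    by (simp add: nn_integral_add nn_integral_cmult)
  also have "\<dots> \<le> ennreal (\<mu>1 + \<beta>) * ennreal I\<^sub>u + ennreal (\<mu>2 + \<beta>) * ennreal I\<^sub>v"
    by (intro add_mono mult_left_mono I\<^sub>u I\<^sub>v) auto
  also have "\<dots> = ennreal ((\<mu>1 + \<beta>) * I\<^sub>u + (\<mu>2 + \<beta>) * I\<^sub>v)"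
    using assms(4-8) by (simp flip: ennreal_plus ennreal_mult)
  finally have "(\<integral>x. F x \<partial>lborel) \<le> (\<mu>1 + \<beta>) * I\<^sub>u + (\<mu>2 + \<beta>) * I\<^sub>v"
    using F_nonneg assms(4-8)
    by (simp add: integral_eq_nn_integral F_def enn2real_leI)
  then show ?thesis
    using \<open>0 < p\<close> by (simp add: energy_def F_def divide_right_mono diff_divide_distrib)
qed

definition power_sandwiched :: "('a \<Rightarrow> real) \<Rightarrow> ('a \<Rightarrow> real) \<Rightarrow> real \<Rightarrow> real \<Rightarrow> 'a set \<Rightarrow> bool" where
  "power_sandwiched T E M \<gamma> Z \<longleftrightarrow>
     (\<forall>z\<in>Z. 0 < T z \<and> E z \<le> T z / 2 \<and> T z / 2 - M * T z powr \<gamma> \<le> E z)"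

lemma energy_power_sandwiched:
  fixes s p A \<mu>1 \<mu>2 \<beta> :: real and Z :: "((real^'n \<Rightarrow> real) \<times> (real^'n \<Rightarrow> real)) set"
  assumes "0 < s" "s < 1" "2 * s < real CARD('n)" "1 < p"
    and "p * (real CARD('n) - 2 * s) < real CARD('n)"
    and "0 < A" "0 < \<mu>1" "0 < \<mu>2" "0 < \<beta>"
    and in_Z: "\<And>u v. (u, v) \<in> Z \<Longrightarrow> u \<in> Hs s \<and> v \<in> Hs s
        \<and> 0 < (\<integral>x. (u x)^2 \<partial>lborel) \<and> (\<integral>x. (u x)^2 \<partial>lborel) \<le> A
      \<and> 0 < (\<integral>x. (v x)^2 \<partial>lborel) \<and> (\<integral>x. (v x)^2 \<partial>lborel) \<le> A"
  obtains M where "0 < M"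
    "power_sandwiched (\<lambda>z. frac_grad_sq s (fst z) + frac_grad_sq s (snd z))
       (\<lambda>z. energy s p \<mu>1 \<mu>2 \<beta> (fst z) (snd z)) M ((p - 1) * real CARD('n) / (2 * s)) Z"
proof -
  define \<gamma> where "\<gamma> = (p - 1) * real CARD('n) / (2 * s)"
  have "0 \<le> \<gamma>"
    using assms(1,4) by (simp add: \<gamma>_def)
  obtain C where "0 < C" and GN:
    "\<And>u :: real^'n \<Rightarrow> real. u \<in> Hs s \<Longrightarrow> 0 < (\<integral>x. (u x)^2 \<partial>lborel) \<Longrightarrow> (\<integral>x. (u x)^2 \<partial>lborel) \<le> A
       \<Longrightarrow> 0 < frac_grad_sq s u \<and> (\<integral>\<^sup>+x. ennreal (\<bar>u x\<bar> powr (2*p)) \<partial>lborel)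
             \<le> ennreal (C * frac_grad_sq s u powr \<gamma>)"
    using gagliardo_nirenberg_frac_grad_sq[OF assms(1-6)] unfolding \<gamma>_def by blast
  define M where "M = (\<mu>1 + \<mu>2 + 2 * \<beta>) * C / (2 * p)"
  have "0 < M"
    using assms(4,7-9) \<open>0 < C\<close> by (simp add: M_def)
  let ?T = "\<lambda>z. frac_grad_sq s (fst z) + frac_grad_sq s (snd z)"
  let ?E = "\<lambda>z. energy s p \<mu>1 \<mu>2 \<beta> (fst z) (snd z)"
  have "power_sandwiched ?T ?E M \<gamma> Z"
    unfolding power_sandwiched_def
  proof
    fix z assume "z \<in> Z"
    obtain u v where z: "z = (u, v)"
      by fastforce
    have "u \<in> Hs s" "v \<in> Hs s" and u: "0 < frac_grad_sq s u"
        "(\<integral>\<^sup>+x. ennreal (\<bar>u x\<bar> powr (2*p)) \<partial>lborel) \<le> ennreal (C * frac_grad_sq s u powr \<gamma>)"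
      and v: "0 < frac_grad_sq s v"
        "(\<integral>\<^sup>+x. ennreal (\<bar>v x\<bar> powr (2*p)) \<partial>lborel) \<le> ennreal (C * frac_grad_sq s v powr \<gamma>)"
      using in_Z[of u v] GN[of u] GN[of v] \<open>z \<in> Z\<close> by (simp_all add: z)
    define T where "T = frac_grad_sq s u + frac_grad_sq s v"
    have I_bound: "ennreal (C * frac_grad_sq s w powr \<gamma>) \<le> ennreal (C * T powr \<gamma>)"
      if "0 < frac_grad_sq s w" "frac_grad_sq s w \<le> T" for w :: "real^'n \<Rightarrow> real"
      using that \<open>0 < C\<close> \<open>0 \<le> \<gamma>\<close> by (auto intro!: ennreal_leI mult_left_mono powr_mono2)
    have "T / 2 - ((\<mu>1 + \<beta>) * (C * T powr \<gamma>) + (\<mu>2 + \<beta>) * (C * T powr \<gamma>)) / (2*p)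
        \<le> energy s p \<mu>1 \<mu>2 \<beta> u v"
      unfolding T_def using assms(4,7-9) \<open>0 < C\<close> \<open>u \<in> Hs s\<close> \<open>v \<in> Hs s\<close>
        order.trans[OF u(2) I_bound] order.trans[OF v(2) I_bound] u(1) v(1)
      by (intro half_grad_minus_le_energy) (auto simp: Hs_def T_def)
    moreover have "((\<mu>1 + \<beta>) * (C * T powr \<gamma>) + (\<mu>2 + \<beta>) * (C * T powr \<gamma>)) / (2*p) = M * T powr \<gamma>"
      by (simp add: M_def field_simps)
    moreover have "energy s p \<mu>1 \<mu>2 \<beta> u v \<le> T / 2"
      unfolding T_def using assms(4,7-9) by (intro energy_le_half_grad) auto
    ultimately show "0 < ?T z \<and> ?E z \<le> ?T z / 2 \<and> ?T z / 2 - M * ?T z powr \<gamma> \<le> ?E z"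
      using u(1) v(1) by (simp add: z T_def)
  qed
  with \<open>0 < M\<close> show ?thesis
    unfolding \<gamma>_def by (rule that)
qed

lemma sup_lt_inf_if_power_sandwiched:
  fixes T E :: "'a \<Rightarrow> real"
  assumes "1 < \<gamma>" "0 < M" and sandwich: "power_sandwiched T E M \<gamma> Z"
  obtains K where "0 < K"
    "(SUP z\<in>{z\<in>Z. T z \<le> K}. ereal (E z)) < (INF z\<in>{z\<in>Z. T z = 2*K}. ereal (E z))"
    "\<forall>z\<in>{z\<in>Z. T z \<le> K}. 0 < E z"
proof -
  have bounds: "0 < T z" "E z \<le> T z / 2" "T z / 2 - M * T z powr \<gamma> \<le> E z" if "z \<in> Z" for z
    using sandwich that by (auto simp: power_sandwiched_def)
  define k where "k = (1 / (8*M)) powr (1 / (\<gamma> - 1))"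
  have "0 < k"
    using \<open>0 < M\<close> by (simp add: k_def)
  have "k powr (\<gamma> - 1) = 1 / (8*M)"
    using \<open>0 < M\<close> \<open>1 < \<gamma>\<close> by (simp add: k_def powr_powr)
  have small: "M * x powr \<gamma> \<le> x / 8" if "0 < x" "x \<le> k" for x
  proof -
    have "x powr (\<gamma> - 1) \<le> k powr (\<gamma> - 1)"
      using that \<open>1 < \<gamma>\<close> by (intro powr_mono2) auto
    then have "M * x powr (\<gamma> - 1) \<le> 1/8"
      using \<open>0 < M\<close> \<open>k powr (\<gamma> - 1) = 1 / (8*M)\<close> by (simp add: field_simps)
    then have "x * (M * x powr (\<gamma> - 1)) \<le> x / 8"
      using mult_left_mono[of _ _ x] \<open>0 < x\<close> by fastforce
    moreover have "x powr \<gamma> = x * x powr (\<gamma> - 1)"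
      using \<open>0 < x\<close> powr_add[of x 1 "\<gamma> - 1"] by simp
    ultimately show ?thesis
      by (simp add: algebra_simps)
  qed
  show ?thesis
  proof (rule that[of "k/2"])
    show "0 < k/2"
      using \<open>0 < k\<close> by simp
    have "(SUP z\<in>{z\<in>Z. T z \<le> k/2}. ereal (E z)) \<le> ereal (k/4)"
      using bounds by (intro SUP_least) fastforce
    also have "\<dots> < ereal (3*k/8)"
      using \<open>0 < k\<close> by simp
    also have "\<dots> \<le> (INF z\<in>{z\<in>Z. T z = 2 * (k/2)}. ereal (E z))"
      using bounds small[of k] \<open>0 < k\<close> by (intro INF_greatest) fastforce
    finally show "(SUP z\<in>{z\<in>Z. T z \<le> k/2}. ereal (E z)) < (INF z\<in>{z\<in>Z. T z = 2 * (k/2)}. ereal (E z))" .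
    show "\<forall>z\<in>{z\<in>Z. T z \<le> k/2}. 0 < E z"
      using bounds small \<open>0 < k\<close> by fastforce
  qed
qed

theorem lemma4p2:
  fixes s p a1 a2 \<mu>1 \<mu>2 \<beta> :: real
  defines "N \<equiv> real CARD('n)"
  assumes "0 < s" "s < 1" "2* s < N" "N \<le> 4* s"
    and "1 + 2* s/N < p" "p < N/(N - 2* s)"
    and "a1 > 0" "a2 > 0" "\<mu>1 > 0" "\<mu>2 > 0" "\<beta> > 0"
  shows "\<exists>K>0.
    (let A = {(u, v). u \<in> (H_rad s a1 :: (real^'n \<Rightarrow> real) set) \<and> v \<in> H_rad s a2 \<and>
                      frac_grad_sq s u + frac_grad_sq s v \<le> K};
         B = {(u, v). u \<in> (H_rad s a1 :: (real^'n \<Rightarrow> real) set) \<and> v \<in> H_rad s a2 \<and>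
                      frac_grad_sq s u + frac_grad_sq s v = 2*K}
     in (SUP z\<in>A. ereal (energy s p \<mu>1 \<mu>2 \<beta> (fst z) (snd z)))
          < (INF z\<in>B. ereal (energy s p \<mu>1 \<mu>2 \<beta> (fst z) (snd z)))
        \<and> (\<forall>(u, v)\<in>A. energy s p \<mu>1 \<mu>2 \<beta> u v > 0))"
proof -
  have "1 < p"
    using assms(2,4,6) by (smt (verit) divide_pos_pos)
  have dim: "2 * s < real CARD('n)" "p * (real CARD('n) - 2 * s) < real CARD('n)"
    and "1 < (p - 1) * real CARD('n) / (2 * s)"
    using assms(2,4,6,7) by (simp_all add: N_def field_simps)
  let ?Z = "H_rad s a1 \<times> (H_rad s a2 :: (real^'n \<Rightarrow> real) set)"
  let ?T = "\<lambda>z. frac_grad_sq s (fst z) + frac_grad_sq s (snd z)"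
  let ?E = "\<lambda>z. energy s p \<mu>1 \<mu>2 \<beta> (fst z) (snd z)"
  have "0 < max (a1^2) (a2^2)"
    using assms(8) by (simp add: less_max_iff_disj)
  moreover have "u \<in> Hs s \<and> v \<in> Hs s
      \<and> 0 < (\<integral>x. (u x)^2 \<partial>lborel) \<and> (\<integral>x. (u x)^2 \<partial>lborel) \<le> max (a1^2) (a2^2)
      \<and> 0 < (\<integral>x. (v x)^2 \<partial>lborel) \<and> (\<integral>x. (v x)^2 \<partial>lborel) \<le> max (a1^2) (a2^2)"
    if "(u, v) \<in> ?Z" for u v
    using that assms(8,9) by (auto simp: H_rad_def)
  ultimately obtain M where "0 < M" "power_sandwiched ?T ?E M ((p - 1) * real CARD('n) / (2 * s)) ?Z"
    using energy_power_sandwiched[OF assms(2,3) dim(1) \<open>1 < p\<close> dim(2) _ assms(10-12)] by blast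
  then obtain K where "0 < K"
    and gap: "(SUP z\<in>{z\<in>?Z. ?T z \<le> K}. ereal (?E z)) < (INF z\<in>{z\<in>?Z. ?T z = 2*K}. ereal (?E z))"
    and pos: "\<forall>z\<in>{z\<in>?Z. ?T z \<le> K}. 0 < ?E z"
    using sup_lt_inf_if_power_sandwiched[OF \<open>1 < (p - 1) * real CARD('n) / (2 * s)\<close>] by blast
  have A: "{(u, v). u \<in> H_rad s a1 \<and> v \<in> H_rad s a2 \<and> frac_grad_sq s u + frac_grad_sq s v \<le> K}
      = {z\<in>?Z. ?T z \<le> K}"
    and B: "{(u, v). u \<in> H_rad s a1 \<and> v \<in> H_rad s a2 \<and> frac_grad_sq s u + frac_grad_sq s v = 2*K}
      = {z\<in>?Z. ?T z = 2*K}"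
    by auto
  show ?thesis
    unfolding Let_def by (rule exI[of _ K], unfold A B) (use \<open>0 < K\<close> gap pos in auto)
qed

end
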